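(* Let $\boldsymbol X=A\times_{\max}\boldsymbol Z$ be a recursive max-linear model on a DAG $\mathcal D=(V,E)$ satisfying Assumptions A, and fix any $a>1$. A node $j\in V$ is a source node (i.e. $\mathrm{pa}(j)=\emptyset$) if and only if $$\sigma^2_{M_{i,aj}}-\sigma^2_{M_{ij}}=(a^2-1)\sigma_i^2=a^2-1\quad\text{for all } i\in V\setminus\{j\}.$$ Moreover, if $j$ is not a source node, then $\sigma^2_{M_{i,aj}}-\sigma^2_{M_{ij}}\le a^2-1$ for all $i\neq j$, with strict inequality whenever $i\in\mathrm{an}(j)$.
   Context: Let $\mathcal D=(V,E)$ be a directed acyclic graph with $V=\{1,\dots,d\}$; $\mathrm{pa}(i)$, $\mathrm{an}(i)$, $\mathrm{de}(i)$ denote parents, ancestors (nodes with a directed path to $i$) and descendants of $i$, $\mathrm{An}(i)=\mathrm{an}(i)\cup\{i\}$; $\vee$ denotes maximum. A recursive max-linear model (RMLM) on $\mathcal D$ is the unique solution of $X_i=\bigvee_{k\in\mathrm{pa}(i)}c_{ik}X_k\vee c_{ii}Z_i$, $i\in V$, with edge weights $c_{ik}>0$ ($k\in \mathrm{pa}(i)$), $c_{ii}>0$; it equals $X_i=(A\times_{\max}\boldsymbol Z)_i=\bigvee_{j\in V}a_{ij}Z_j$ where $a_{ii}=c_{ii}$, $a_{ij}$ for $j\in\mathrm{an}(i)$ is the maximum over all directed paths $j=\ell_0\to\ell_1\to\dots\to\ell_m=i$ of $c_{jj}c_{\ell_1\ell_0}\cdots c_{\ell_m\ell_{m-1}}$,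 and $a_{ij}=0$ for $j\notin\mathrm{An}(i)$. Assumptions A: (A1) $Z_1,\dots,Z_d$ are independent, nonnegative, atom-free, with $n\,\mathbb P(n^{-1/2}Z_i>z)\to z^{-2}$ as $n\to\infty$ for all $z>0$; (A2) the norm is the Euclidean norm $\|\cdot\|$; (A3) $A$ is standardised, i.e. each row is divided by its Euclidean norm so that $\sum_{j\in V}a_{ij}^2=1$ for all $i$ (the model is taken as $\boldsymbol X=A\times_{\max}\boldsymbol Z$ with this standardised $A$). Under these assumptions it is known that $a_{ij}>0$ iff $j\in\mathrm{An}(i)$, and $a_{jj}>a_{ij}$ for all $i\neq j$. Angular measure: with columns $\boldsymbol a_k$ of $A$, $\boldsymbol X$ has angular measure $H_{\boldsymbol X}=\sum_{k\in V}\|\boldsymbol a_k\|^2\delta_{\boldsymbol a_k/\|\boldsymbol a_k\|}$ on $\Theta^{d-1}_+=\{\boldsymbol\omega\in[0,\infty)^d:\|\boldsymbol\omega\|=1\}$. For weights $b_1,\dots,b_d\ge0$, the squared scaling of the max-projection $Y=\bigvee_k b_kX_k$ is $\sigma_Y^2=\int_{\Theta^{d-1}_+}\bigvee_k b_k^2\omega_k^2\,dH_{\boldsymbol X}(\boldsymbol\omega)$; $\sigma_i^2:=\sigma^2_{X_i}$. Notation: $M_{i,aj}=X_i\vee aX_j$, $M_{ij}=X_i\vee X_j$. *)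

theory Defs
  imports Complex_Main
begin

text \<open>DAG on a finite node type 'v; an edge (k, i) \<in> E means k \<rightarrow> i.\<close>

definition pa :: "('v \<times> 'v) set \<Rightarrow> 'v \<Rightarrow> 'v set" where
  "pa E i = {k. (k, i) \<in> E}"

definition an :: "('v \<times> 'v) set \<Rightarrow> 'v \<Rightarrow> 'v set" where
  "an E i = {j. (j, i) \<in> E\<^sup>+}"

definition is_path :: "('v \<times> 'v) set \<Rightarrow> 'v list \<Rightarrow> 'v \<Rightarrow> 'v \<Rightarrow> bool" where
  "is_path E p j i \<longleftrightarrow> length p \<ge> 2 \<and> hd p = j \<and> last p = i \<and>
     (\<forall>e \<in> set (zip p (tl p)). e \<in> E)"

definition path_weight :: "('v \<Rightarrow> 'v \<Rightarrow> real) \<Rightarrow> 'v list \<Rightarrow> real" where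
  "path_weight c p = prod_list (map (\<lambda>(u, v). c v u) (zip p (tl p)))"

definition ml_coeff :: "('v \<times> 'v) set \<Rightarrow> ('v \<Rightarrow> 'v \<Rightarrow> real) \<Rightarrow> 'v \<Rightarrow> 'v \<Rightarrow> real" where
  "ml_coeff E c i j =
     (if i = j then c i i
      else if j \<in> an E i then Max {c j j * path_weight c p | p. is_path E p j i}
      else 0)"

text \<open>Standardised coefficient matrix (Assumption A3): rows divided by Euclidean norm.\<close>
definition std_coeff :: "('v::finite \<times> 'v) set \<Rightarrow> ('v \<Rightarrow> 'v \<Rightarrow> real) \<Rightarrow> 'v \<Rightarrow> 'v \<Rightarrow> real" where
  "std_coeff E c i j = ml_coeff E c i j / sqrt (\<Sum>l\<in>UNIV. (ml_coeff E c i l)\<^sup>2)"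

definition col_norm :: "('v::finite \<Rightarrow> 'v \<Rightarrow> real) \<Rightarrow> 'v \<Rightarrow> real" where
  "col_norm A k = sqrt (\<Sum>i\<in>UNIV. (A i k)\<^sup>2)"

text \<open>Integral of f against the angular measure H_X = \<Sum>_k ||a_k||^2 \<delta>_{a_k/||a_k||}.\<close>
definition ang_integral :: "('v::finite \<Rightarrow> 'v \<Rightarrow> real) \<Rightarrow> (('v \<Rightarrow> real) \<Rightarrow> real) \<Rightarrow> real" where
  "ang_integral A f = (\<Sum>k\<in>UNIV. (col_norm A k)\<^sup>2 * f (\<lambda>i. A i k / col_norm A k))"

text \<open>Squared scaling of the max-projection Y = \<Or>_k b_k X_k.\<close>
definition sigma2 :: "('v::finite \<Rightarrow> 'v \<Rightarrow> real) \<Rightarrow> ('v \<Rightarrow> real) \<Rightarrow> real" where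
  "sigma2 A b = ang_integral A (\<lambda>\<omega>. Max (range (\<lambda>k. (b k)\<^sup>2 * (\<omega> k)\<^sup>2)))"

text \<open>Weight vector of M_{i,aj} = X_i \<or> a X_j (i \<noteq> j); M_{ij} is the case a = 1.\<close>
definition wM :: "'v \<Rightarrow> real \<Rightarrow> 'v \<Rightarrow> 'v \<Rightarrow> real" where
  "wM i a j = (\<lambda>k. if k = i then 1 else if k = j then a else 0)"

text \<open>Weight vector of X_i.\<close>
definition wX :: "'v \<Rightarrow> 'v \<Rightarrow> real" where
  "wX i = (\<lambda>k. if k = i then 1 else 0)"

end

theory Submission
  imports Defs
begin

text \<open>
  For a weight vector supported on \<open>{i, j}\<close> the scaling \<open>\<sigma>\<^sup>2(X\<^sub>i \<or> b X\<^sub>j)\<close> is the column sum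
  \<open>\<Sum>\<^sub>k max (a\<^sub>i\<^sub>k\<^sup>2) (b\<^sup>2 a\<^sub>j\<^sub>k\<^sup>2)\<close>, so raising \<open>b\<close> from 1 to \<open>a\<close> gains at most \<open>(a\<^sup>2 - 1) a\<^sub>j\<^sub>k\<^sup>2\<close>
  in column \<open>k\<close>, with equality iff \<open>a\<^sub>i\<^sub>k\<^sup>2 \<le> a\<^sub>j\<^sub>k\<^sup>2\<close> or \<open>a\<^sub>j\<^sub>k = 0\<close>; summing and using that rows
  have unit norm gives the bound \<open>a\<^sup>2 - 1\<close>. A source row is the unit vector \<open>e\<^sub>j\<close>, so every
  column is an equality case. If \<open>i\<close> is an ancestor of \<open>j\<close>, then \<open>0 < a\<^sub>j\<^sub>i < a\<^sub>i\<^sub>i\<close>, so column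
  \<open>i\<close> is strict: concatenating paths shows that the unstandardised row \<open>j\<close> dominates row \<open>i\<close>
  rescaled by \<open>a\<^sub>j\<^sub>i / c\<^sub>i\<^sub>i\<close>, strictly in column \<open>j\<close>, and standardising turns this into
  \<open>a\<^sub>j\<^sub>i < a\<^sub>i\<^sub>i\<close>.
\<close>

lemma is_path_Cons_Cons:
  "is_path E (x # y # q) u v \<longleftrightarrow>
     x = u \<and> (x, y) \<in> E \<and> (if q = [] then y = v else is_path E (y # q) y v)"
  by (cases q) (auto simp: is_path_def)

lemma is_path_induct [consumes 1, case_names edge step]:
  assumes "is_path E p u v"
    and edge: "\<And>u. (u, v) \<in> E \<Longrightarrow> P [u, v] u"
    and step: "\<And>u y q. (u, y) \<in> E \<Longrightarrow> is_path E (y # q) y v \<Longrightarrow> P (y # q) y \<Longrightarrow> P (u # y # q) u"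
  shows "P p u"
  using assms(1)
proof (induction p arbitrary: u)
  case Nil
  then show ?case by (simp add: is_path_def)
next
  case (Cons x p)
  then obtain y q where p: "p = y # q"
    by (cases p) (auto simp: is_path_def)
  show ?case
  proof (cases "q = []")
    case True
    then show ?thesis using Cons.prems edge by (auto simp: p is_path_Cons_Cons)
  next
    case False
    then show ?thesis using Cons step by (auto simp: p is_path_Cons_Cons)
  qed
qed

lemma path_weight_Cons_Cons: "path_weight c (x # y # q) = c y x * path_weight c (y # q)"
  by (simp add: path_weight_def)

lemma is_path_imp_trancl: "is_path E p u v \<Longrightarrow> (u, v) \<in> E\<^sup>+"
  by (induction rule: is_path_induct) (auto intro: trancl_into_trancl2)

lemma trancl_imp_is_path: "(u, v) \<in> E\<^sup>+ \<Longrightarrow> \<exists>p. is_path E p u v"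
proof (induction rule: converse_trancl_induct)
  case (base u)
  then have "is_path E [u, v] u v" by (simp add: is_path_def)
  then show ?case ..
next
  case (step u y)
  then obtain p where p: "is_path E p y v" by blast
  then obtain z q where "p = y # z # q"
    by (cases p rule: remdups_adj.cases) (auto simp: is_path_def)
  then have "is_path E (u # p) u v" using p step.hyps by (auto simp: is_path_Cons_Cons)
  then show ?case ..
qed

lemma is_path_set_rtrancl: "is_path E p u v \<Longrightarrow> w \<in> set p \<Longrightarrow> (u, w) \<in> E\<^sup>*"
  by (induction rule: is_path_induct) (auto intro: converse_rtrancl_into_rtrancl)

lemma is_path_distinct:
  assumes "acyclic E" and "is_path E p u v"
  shows "distinct p"
  using assms(2)
proof (induction rule: is_path_induct)
  case (step u y q)
  have "u \<notin> set (y # q)"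
  proof
    assume "u \<in> set (y # q)"
    then have "(u, u) \<in> E\<^sup>+"
      using step.hyps is_path_set_rtrancl by (meson rtrancl_into_trancl2)
    then show False using assms(1) by (simp add: acyclic_def)
  qed
  then show ?case using step by simp
qed (use assms(1) in \<open>auto simp: acyclic_def\<close>)

lemma finite_paths:
  fixes E :: "('v::finite \<times> 'v) set"
  assumes "acyclic E"
  shows "finite {p. is_path E p u v}"
proof (rule finite_subset)
  let ?bounded = "{p :: 'v list. set p \<subseteq> UNIV \<and> length p \<le> card (UNIV :: 'v set)}"
  show "finite ?bounded"
    by (rule finite_lists_length_le) simp
  have "length p \<le> card (UNIV :: 'v set)" if "is_path E p u v" for p
    using is_path_distinct[OF assms that] by (metis card_mono distinct_card finite subset_UNIV)
  then show "{p. is_path E p u v} \<subseteq> ?bounded" by blast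
qed

lemma is_path_append:
  "is_path E p u w \<Longrightarrow> is_path E q w v \<Longrightarrow> is_path E (p @ tl q) u v"
proof (induction rule: is_path_induct)
  case (edge u)
  then show ?case by (cases q rule: remdups_adj.cases) (auto simp: is_path_def)
next
  case (step u y r)
  then show ?case by (cases r) (auto simp: is_path_Cons_Cons is_path_def)
qed

lemma path_weight_append:
  "is_path E p u w \<Longrightarrow> is_path E q w v \<Longrightarrow> path_weight c (p @ tl q) = path_weight c p * path_weight c q"
proof (induction rule: is_path_induct)
  case (edge u)
  then show ?case by (cases q rule: remdups_adj.cases) (auto simp: is_path_def path_weight_def)
next
  case (step u y r)
  then show ?case by (cases r) (auto simp: path_weight_Cons_Cons)
qed

lemma path_weight_pos:
  assumes "\<And>u v. (u, v) \<in> E \<Longrightarrow> c v u > 0" and "is_path E p u v"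
  shows "path_weight c p > 0"
  using assms(2) by (induction rule: is_path_induct) (auto simp: assms(1) path_weight_def)

locale max_linear_dag =
  fixes E :: "('v::finite \<times> 'v) set" and c :: "'v \<Rightarrow> 'v \<Rightarrow> real"
  assumes acyclic: "acyclic E"
    and edge_pos: "\<And>i k. k \<in> pa E i \<Longrightarrow> c i k > 0"
    and diag_pos: "\<And>i. c i i > 0"
begin

lemma edge_weight_pos: "(k, i) \<in> E \<Longrightarrow> 0 < c i k"
  by (rule edge_pos) (simp add: pa_def)

lemma not_an_self: "i \<notin> an E i"
  using acyclic by (simp add: an_def acyclic_def)

lemma an_asym: "j \<in> an E i \<Longrightarrow> i \<notin> an E j"
  using acyclic by (auto simp: an_def acyclic_def dest: trancl_trans)

lemma ml_coeff_diag: "ml_coeff E c i i = c i i"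
  by (simp add: ml_coeff_def)

lemma ml_coeff_outside_An: "j \<noteq> i \<Longrightarrow> j \<notin> an E i \<Longrightarrow> ml_coeff E c i j = 0"
  by (simp add: ml_coeff_def)

lemma ml_coeff_an: "j \<in> an E i \<Longrightarrow> ml_coeff E c i j = Max {c j j * path_weight c p | p. is_path E p j i}"
  using not_an_self by (auto simp: ml_coeff_def)

lemma ml_coeff_ge_path:
  assumes "is_path E p j i"
  shows "c j j * path_weight c p \<le> ml_coeff E c i j"
proof -
  have "j \<in> an E i" using is_path_imp_trancl[OF assms] by (simp add: an_def)
  then show ?thesis
    using assms finite_paths[OF acyclic] by (auto simp: ml_coeff_an intro!: Max_ge)
qed

lemma ml_coeff_attained:
  assumes "j \<in> an E i"
  obtains p where "is_path E p j i" and "ml_coeff E c i j = c j j * path_weight c p"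
proof -
  let ?W = "{c j j * path_weight c p | p. is_path E p j i}"
  have "finite ?W" using finite_paths[OF acyclic] by (rule finite_image_set)
  moreover have "?W \<noteq> {}"
    using assms trancl_imp_is_path by (fastforce simp: an_def)
  ultimately have "Max ?W \<in> ?W" by (rule Max_in)
  then show ?thesis using that assms by (auto simp: ml_coeff_an)
qed

lemma ml_coeff_an_pos: "j \<in> an E i \<Longrightarrow> 0 < ml_coeff E c i j"
  by (erule ml_coeff_attained) (simp add: diag_pos path_weight_pos[of E c, OF edge_weight_pos])

lemma ml_coeff_nonneg: "0 \<le> ml_coeff E c i j"
  using ml_coeff_an_pos[of j i] diag_pos[of i]
  by (cases "j = i \<or> j \<in> an E i") (auto simp: ml_coeff_diag ml_coeff_outside_An less_imp_le)

text \<open>Concatenating a heaviest path from k to i with one from i to j gives a path from k to j.\<close>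
lemma ml_coeff_trans:
  assumes ij: "i \<in> an E j"
  shows "ml_coeff E c j i * ml_coeff E c i k \<le> c i i * ml_coeff E c j k"
proof -
  obtain q where q: "is_path E q i j" "ml_coeff E c j i = c i i * path_weight c q"
    using ij by (rule ml_coeff_attained)
  consider "k = i" | "k \<in> an E i" | "k \<noteq> i" "k \<notin> an E i" by blast
  then show ?thesis
  proof cases
    case 1
    then show ?thesis by (simp add: ml_coeff_diag)
  next
    case 2
    then obtain p where p: "is_path E p k i" "ml_coeff E c i k = c k k * path_weight c p"
      by (rule ml_coeff_attained)
    have "c k k * path_weight c (p @ tl q) \<le> ml_coeff E c j k"
      using is_path_append[OF p(1) q(1)] by (rule ml_coeff_ge_path)
    then show ?thesis
      using diag_pos[of i] by (simp add: p(2) q(2) path_weight_append[OF p(1) q(1)] ac_simps)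
  next
    case 3
    then show ?thesis
      using diag_pos[of i] ml_coeff_nonneg by (simp add: ml_coeff_outside_An)
  qed
qed

lemma ml_row_sq_pos: "0 < (\<Sum>l\<in>UNIV. (ml_coeff E c i l)\<^sup>2)"
proof -
  have "0 < (ml_coeff E c i i)\<^sup>2" using diag_pos[of i] by (simp add: ml_coeff_diag)
  also have "\<dots> \<le> (\<Sum>l\<in>UNIV. (ml_coeff E c i l)\<^sup>2)" by (rule member_le_sum) auto
  finally show ?thesis .
qed

lemma std_coeff_row_sq_sum: "(\<Sum>k\<in>UNIV. (std_coeff E c i k)\<^sup>2) = 1"
  using ml_row_sq_pos[of i]
  by (simp add: std_coeff_def power_divide sum_divide_distrib[symmetric])

lemma std_coeff_diag_pos: "0 < std_coeff E c i i"
  using ml_row_sq_pos[of i] diag_pos[of i] by (simp add: std_coeff_def ml_coeff_diag)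

lemma std_coeff_an_pos: "j \<in> an E i \<Longrightarrow> 0 < std_coeff E c i j"
  using ml_row_sq_pos[of i] ml_coeff_an_pos[of j i] by (simp add: std_coeff_def)

lemma col_norm_std_coeff_pos: "0 < col_norm (std_coeff E c) k"
proof -
  have "0 < (std_coeff E c k k)\<^sup>2" using std_coeff_diag_pos[of k] by simp
  also have "\<dots> \<le> (\<Sum>i\<in>UNIV. (std_coeff E c i k)\<^sup>2)" by (rule member_le_sum) auto
  finally show ?thesis by (simp add: col_norm_def)
qed

lemma std_coeff_source:
  assumes "pa E j = {}"
  shows "std_coeff E c j k = (if k = j then 1 else 0)"
proof -
  have "an E j = {}"
    using assms by (auto simp: an_def pa_def elim: tranclE)
  then have ml: "ml_coeff E c j l = (if l = j then c j j else 0)" for l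
    by (simp add: ml_coeff_def)
  have "(\<Sum>l\<in>UNIV. (ml_coeff E c j l)\<^sup>2) = (c j j)\<^sup>2"
    by (simp add: ml if_distrib[of "\<lambda>x. x\<^sup>2"] cong: if_cong)
  then show ?thesis using diag_pos[of j] by (simp add: std_coeff_def ml)
qed

lemma ml_row_sq_less:
  assumes ij: "i \<in> an E j"
  shows "(ml_coeff E c j i)\<^sup>2 * (\<Sum>k\<in>UNIV. (ml_coeff E c i k)\<^sup>2)
    < (c i i)\<^sup>2 * (\<Sum>k\<in>UNIV. (ml_coeff E c j k)\<^sup>2)"
proof -
  have "(\<Sum>k\<in>UNIV. (ml_coeff E c j i * ml_coeff E c i k)\<^sup>2) < (\<Sum>k\<in>UNIV. (c i i * ml_coeff E c j k)\<^sup>2)"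
  proof (rule sum_strict_mono_ex1)
    show "\<forall>k\<in>UNIV. (ml_coeff E c j i * ml_coeff E c i k)\<^sup>2 \<le> (c i i * ml_coeff E c j k)\<^sup>2"
      using ml_coeff_trans[OF ij] ml_coeff_nonneg by (auto intro!: power_mono)
    have "ml_coeff E c i j = 0"
      using an_asym[OF ij] not_an_self ij by (auto intro: ml_coeff_outside_An)
    then show "\<exists>k\<in>UNIV. (ml_coeff E c j i * ml_coeff E c i k)\<^sup>2 < (c i i * ml_coeff E c j k)\<^sup>2"
      using diag_pos[of i] diag_pos[of j] by (intro bexI[of _ j]) (simp_all add: ml_coeff_diag)
  qed simp
  then show ?thesis by (simp add: power_mult_distrib sum_distrib_left)
qed

lemma std_coeff_less_diag:
  assumes "i \<in> an E j"
  shows "std_coeff E c j i < std_coeff E c i i"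
proof -
  have "(std_coeff E c j i)\<^sup>2 < (std_coeff E c i i)\<^sup>2"
    using ml_row_sq_less[OF assms] ml_row_sq_pos[of i] ml_row_sq_pos[of j]
    by (simp add: std_coeff_def ml_coeff_diag divide_simps ac_simps)
  then show ?thesis
    using std_coeff_diag_pos[of i] by (simp add: power_less_imp_less_base)
qed

end

lemma max_mult_diff_le:
  fixes b x y :: real
  assumes "1 \<le> b" "0 \<le> y"
  shows "max x (b * y) - max x y \<le> (b - 1) * y"
  using assms mult_right_mono[of 1 b y] by (simp add: max_def algebra_simps)

lemma max_mult_diff_less:
  fixes b x y :: real
  assumes "1 < b" "0 < y" "y < x"
  shows "max x (b * y) - max x y < (b - 1) * y"
  using assms by (simp add: max_def algebra_simps)

lemma max_mult_diff_eq:
  fixes b x y :: real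
  assumes "1 \<le> b" "0 \<le> y" "x \<le> y"
  shows "max x (b * y) - max x y = (b - 1) * y"
  using assms mult_right_mono[of 1 b y] by (simp add: max_def algebra_simps)

lemma sigma2_eq_sum_Max:
  fixes A :: "'v::finite \<Rightarrow> 'v \<Rightarrow> real"
  assumes "\<And>k. 0 < col_norm A k"
  shows "sigma2 A b = (\<Sum>k\<in>UNIV. Max (range (\<lambda>l. (b l)\<^sup>2 * (A l k)\<^sup>2)))"
  unfolding sigma2_def ang_integral_def
proof (rule sum.cong[OF refl])
  fix k
  let ?n = "col_norm A k"
  have "range (\<lambda>l. (b l)\<^sup>2 * (A l k / ?n)\<^sup>2) = (\<lambda>x. x / ?n\<^sup>2) ` range (\<lambda>l. (b l)\<^sup>2 * (A l k)\<^sup>2)"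
    by (auto simp: power_divide image_iff)
  moreover have "Max ((\<lambda>x. x / ?n\<^sup>2) ` range (\<lambda>l. (b l)\<^sup>2 * (A l k)\<^sup>2))
      = Max (range (\<lambda>l. (b l)\<^sup>2 * (A l k)\<^sup>2)) / ?n\<^sup>2"
    by (rule mono_Max_commute[symmetric]) (auto simp: mono_def divide_right_mono)
  ultimately show "?n\<^sup>2 * Max (range (\<lambda>l. (b l)\<^sup>2 * ((\<lambda>l. A l k / ?n) l)\<^sup>2))
      = Max (range (\<lambda>l. (b l)\<^sup>2 * (A l k)\<^sup>2))"
    using assms[of k] by simp
qed

lemma Max_range_wX:
  fixes x :: "'v::finite \<Rightarrow> real"
  shows "Max (range (\<lambda>l. (wX i l)\<^sup>2 * (x l)\<^sup>2)) = (x i)\<^sup>2"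
proof (rule Max_eqI)
  show "(x i)\<^sup>2 \<in> range (\<lambda>l. (wX i l)\<^sup>2 * (x l)\<^sup>2)"
    by (rule image_eqI[of _ _ i]) (simp_all add: wX_def)
qed (auto simp: wX_def)

lemma Max_range_wM:
  fixes x :: "'v::finite \<Rightarrow> real"
  assumes "i \<noteq> j"
  shows "Max (range (\<lambda>l. (wM i a j l)\<^sup>2 * (x l)\<^sup>2)) = max ((x i)\<^sup>2) (a\<^sup>2 * (x j)\<^sup>2)"
proof (rule Max_eqI)
  show "max ((x i)\<^sup>2) (a\<^sup>2 * (x j)\<^sup>2) \<in> range (\<lambda>l. (wM i a j l)\<^sup>2 * (x l)\<^sup>2)"
    using assms by (cases "(x i)\<^sup>2 \<le> a\<^sup>2 * (x j)\<^sup>2")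
      (auto simp: wM_def max_def power_mult_distrib image_iff intro: exI[of _ i] exI[of _ j])
qed (use assms in \<open>auto simp: wM_def power_mult_distrib le_max_iff_disj\<close>)

context
  fixes A :: "'v::finite \<Rightarrow> 'v \<Rightarrow> real"
  assumes col_norm_pos: "\<And>k. 0 < col_norm A k"
begin

lemma sigma2_wX: "sigma2 A (wX i) = (\<Sum>k\<in>UNIV. (A i k)\<^sup>2)"
  by (simp add: sigma2_eq_sum_Max[OF col_norm_pos] Max_range_wX)

lemma sigma2_wM_diff:
  assumes "i \<noteq> j"
  shows "sigma2 A (wM i a j) - sigma2 A (wM i 1 j)
    = (\<Sum>k\<in>UNIV. max ((A i k)\<^sup>2) (a\<^sup>2 * (A j k)\<^sup>2) - max ((A i k)\<^sup>2) ((A j k)\<^sup>2))"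
  using assms by (simp add: sigma2_eq_sum_Max[OF col_norm_pos] Max_range_wM sum_subtractf)

lemma sigma2_wM_diff_le:
  assumes "i \<noteq> j" "1 \<le> a\<^sup>2"
  shows "sigma2 A (wM i a j) - sigma2 A (wM i 1 j) \<le> (a\<^sup>2 - 1) * sigma2 A (wX j)"
  unfolding sigma2_wM_diff[OF assms(1)] sigma2_wX sum_distrib_left
  by (rule sum_mono) (simp add: max_mult_diff_le assms(2))

lemma sigma2_wM_diff_less:
  assumes "i \<noteq> j" "1 < a\<^sup>2" "A j k \<noteq> 0" "(A j k)\<^sup>2 < (A i k)\<^sup>2"
  shows "sigma2 A (wM i a j) - sigma2 A (wM i 1 j) < (a\<^sup>2 - 1) * sigma2 A (wX j)"
  unfolding sigma2_wM_diff[OF assms(1)] sigma2_wX sum_distrib_left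
proof (rule sum_strict_mono_ex1)
  show "\<exists>l\<in>UNIV. max ((A i l)\<^sup>2) (a\<^sup>2 * (A j l)\<^sup>2) - max ((A i l)\<^sup>2) ((A j l)\<^sup>2) < (a\<^sup>2 - 1) * (A j l)\<^sup>2"
    using assms(2-4) by (intro bexI[of _ k] max_mult_diff_less) simp_all
qed (use assms(2) in \<open>simp_all add: max_mult_diff_le\<close>)

lemma sigma2_wM_diff_eq:
  assumes "i \<noteq> j" "1 \<le> a\<^sup>2" "\<And>k. k \<noteq> j \<Longrightarrow> A j k = 0" "(A i j)\<^sup>2 \<le> (A j j)\<^sup>2"
  shows "sigma2 A (wM i a j) - sigma2 A (wM i 1 j) = (a\<^sup>2 - 1) * sigma2 A (wX j)"
  unfolding sigma2_wM_diff[OF assms(1)] sigma2_wX sum_distrib_left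
proof (rule sum.cong[OF refl])
  fix k
  show "max ((A i k)\<^sup>2) (a\<^sup>2 * (A j k)\<^sup>2) - max ((A i k)\<^sup>2) ((A j k)\<^sup>2) = (a\<^sup>2 - 1) * (A j k)\<^sup>2"
    using max_mult_diff_eq[OF assms(2) zero_le_power2 assms(4)] assms(3) by (cases "k = j") simp_all
qed

end

context max_linear_dag
begin

lemma sigma2_std_wX: "sigma2 (std_coeff E c) (wX i) = 1"
  using sigma2_wX[OF col_norm_std_coeff_pos] by (simp add: std_coeff_row_sq_sum)

lemma sigma2_std_wM_diff_le:
  "i \<noteq> j \<Longrightarrow> 1 \<le> a\<^sup>2 \<Longrightarrow>
    sigma2 (std_coeff E c) (wM i a j) - sigma2 (std_coeff E c) (wM i 1 j) \<le> a\<^sup>2 - 1"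
  using sigma2_wM_diff_le[OF col_norm_std_coeff_pos] by (simp add: sigma2_std_wX)

lemma sigma2_std_wM_diff_less_an:
  assumes "i \<in> an E j" "1 < a\<^sup>2"
  shows "sigma2 (std_coeff E c) (wM i a j) - sigma2 (std_coeff E c) (wM i 1 j) < a\<^sup>2 - 1"
proof -
  have "i \<noteq> j" using assms(1) not_an_self by blast
  have "0 < std_coeff E c j i" "std_coeff E c j i < std_coeff E c i i"
    using std_coeff_an_pos[OF assms(1)] std_coeff_less_diag[OF assms(1)] .
  then have "(std_coeff E c j i)\<^sup>2 < (std_coeff E c i i)\<^sup>2" by (simp add: power_strict_mono)
  then show ?thesis
    using sigma2_wM_diff_less[OF col_norm_std_coeff_pos \<open>i \<noteq> j\<close> assms(2), of i]
      \<open>0 < std_coeff E c j i\<close> by (simp add: sigma2_std_wX)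
qed

lemma sigma2_std_wM_diff_source:
  assumes "pa E j = {}" "i \<noteq> j" "1 \<le> a\<^sup>2"
  shows "sigma2 (std_coeff E c) (wM i a j) - sigma2 (std_coeff E c) (wM i 1 j) = a\<^sup>2 - 1"
proof -
  note row_j = std_coeff_source[OF assms(1)]
  have "(std_coeff E c i j)\<^sup>2 \<le> (\<Sum>k\<in>UNIV. (std_coeff E c i k)\<^sup>2)" by (rule member_le_sum) auto
  also have "\<dots> = (std_coeff E c j j)\<^sup>2" by (simp add: std_coeff_row_sq_sum row_j)
  finally show ?thesis
    using sigma2_wM_diff_eq[OF col_norm_std_coeff_pos assms(2,3)] row_j by (simp add: sigma2_std_wX)
qed

end

theorem theorem4p2:
  fixes E :: "('v::finite \<times> 'v) set" and c :: "'v \<Rightarrow> 'v \<Rightarrow> real"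
    and a :: real and j :: 'v
  assumes dag: "acyclic E"
    and edge_pos: "\<And>i k. k \<in> pa E i \<Longrightarrow> c i k > 0"
    and diag_pos: "\<And>i. c i i > 0"
    and a_gt: "a > 1"
  defines "A \<equiv> std_coeff E c"
  shows "(pa E j = {} \<longleftrightarrow>
            (\<forall>i. i \<noteq> j \<longrightarrow>
               sigma2 A (wM i a j) - sigma2 A (wM i 1 j) = (a\<^sup>2 - 1) * sigma2 A (wX i) \<and>
               (a\<^sup>2 - 1) * sigma2 A (wX i) = a\<^sup>2 - 1))
       \<and> (pa E j \<noteq> {} \<longrightarrow>
            (\<forall>i. i \<noteq> j \<longrightarrow> sigma2 A (wM i a j) - sigma2 A (wM i 1 j) \<le> a\<^sup>2 - 1) \<and>
            (\<forall>i \<in> an E j. i \<noteq> j \<longrightarrow> sigma2 A (wM i a j) - sigma2 A (wM i 1 j) < a\<^sup>2 - 1))"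
proof -
  interpret max_linear_dag E c
    using dag edge_pos diag_pos by unfold_locales
  have a2: "1 < a\<^sup>2" using a_gt by simp
  note le = sigma2_std_wM_diff_le[of _ j a] and less = sigma2_std_wM_diff_less_an[OF _ a2, of _ j]
  have "\<exists>i \<in> an E j. i \<noteq> j" if "pa E j \<noteq> {}"
    using that not_an_self by (auto simp: pa_def an_def)
  with less have "pa E j = {}"
    if "\<forall>i. i \<noteq> j \<longrightarrow> sigma2 A (wM i a j) - sigma2 A (wM i 1 j) = a\<^sup>2 - 1"
    using that unfolding A_def by fastforce
  then show ?thesis
    using le less sigma2_std_wM_diff_source[of j _ a] a2 unfolding A_def
    by (auto simp: sigma2_std_wX)
qed

end
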